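(* Let $X$ be a space with $\omega\subseteq X\subseteq \beta\omega$ (subspace topology), and let $p$ be a free ultrafilter on $\omega$. Let $(C_n:n\in\omega)$ be a sequence of nonempty, finite, pairwise disjoint subsets of $\omega$, let $\mathcal G=\{g\in\omega^\omega: g(n)\in C_n \text{ for all } n\in\omega\}$, and let $Z_p=\{p\text{-}\lim g: g\in\mathcal G\}$, where the $p$-limits are taken in $\beta\omega$. Regarding each $C_n$ as a point of $\operatorname{CL}(X)$, the following are equivalent: (1) the sequence $(C_n:n\in\omega)$ has a $p$-limit in $\operatorname{CL}(X)$; (2) $\operatorname{cl}_X Z_p$ is the $p$-limit of $(C_n:n\in\omega)$ in $\operatorname{CL}(X)$; (3) $Z_p\subseteq X$. Moreover, if $|C_n|\le |C_{n+1}|$ for every $n\in\omega$ and $|C_n|\to\infty$, then $|Z_p|=\mathfrak c$.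
   Context: $\beta\omega$ is the Stone–Čech compactification of the discrete space $\omega$, identified with the set of ultrafilters on $\omega$ (points of $\omega$ being the principal ultrafilters); $\omega^*=\beta\omega\setminus\omega$ is the set of free ultrafilters. For a space $Y$, $\operatorname{CL}(Y)$ is the set of nonempty closed subsets of $Y$ with the Vietoris topology, generated by the sets $A^+=\{F\in\operatorname{CL}(Y):F\subseteq A\}$ and $A^-=\{F\in\operatorname{CL}(Y):F\cap A\neq\emptyset\}$ for $A\subseteq Y$ open. For $p\in\omega^*$ and a sequence $(y_n:n\in\omega)$ of points of a space $Y$, a point $y\in Y$ is a $p$-limit of the sequence ($y=p\text{-}\lim y_n$) if $\{n\in\omega: y_n\in W\}\in p$ for every neighborhood $W$ of $y$. *)

theory Defs
  imports "HOL-Analysis.Analysis"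
begin

definition ultrafilter_on_nat :: "nat set set \<Rightarrow> bool" where
  "ultrafilter_on_nat U \<longleftrightarrow>
     UNIV \<in> U \<and> {} \<notin> U \<and>
     (\<forall>A B. A \<in> U \<and> B \<in> U \<longrightarrow> A \<inter> B \<in> U) \<and>
     (\<forall>A B. A \<in> U \<and> A \<subseteq> B \<longrightarrow> B \<in> U) \<and>
     (\<forall>A. A \<in> U \<or> - A \<in> U)"

definition free_ultrafilter :: "nat set set \<Rightarrow> bool" where
  "free_ultrafilter U \<longleftrightarrow> ultrafilter_on_nat U \<and> (\<forall>n. {n} \<notin> U)"

text \<open>beta omega as the set of ultrafilters; points of omega are principal ultrafilters.\<close>
definition beta_omega :: "nat set set set" where
  "beta_omega = {U. ultrafilter_on_nat U}"

definition principal :: "nat \<Rightarrow> nat set set" where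
  "principal n = {A. n \<in> A}"

definition beta_top :: "nat set set topology" where
  "beta_top = topology_generated_by {{U \<in> beta_omega. A \<in> U} | A. True}"

definition CL :: "'a topology \<Rightarrow> 'a set set" where
  "CL T = {F. closedin T F \<and> F \<noteq> {}}"

definition vietoris :: "'a topology \<Rightarrow> 'a set topology" where
  "vietoris T = topology_generated_by
     ({{F \<in> CL T. F \<subseteq> A} | A. openin T A} \<union> {{F \<in> CL T. F \<inter> A \<noteq> {}} | A. openin T A})"

definition plim :: "'a topology \<Rightarrow> nat set set \<Rightarrow> 'a \<Rightarrow> (nat \<Rightarrow> 'a) \<Rightarrow> bool" where
  "plim T p y s \<longleftrightarrow> y \<in> topspace T \<and>
     (\<forall>W. openin T W \<and> y \<in> W \<longrightarrow> {n. s n \<in> W} \<in> p)"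

end

theory Submission
  imports Defs "HOL-Library.Equipollence" "HOL-Library.Discrete_Functions"
begin

text \<open>
  Along a selector g of (C n), the principal ultrafilters converge in beta omega to the image
  ultrafilter g(p) = {A. g-preimage of A in p}, so Zp is the set of these image ultrafilters.
  In any space, if every selector of a sequence of closed sets has a p-limit in Z and every point
  of Z is such a limit, then the closure of Z is the Vietoris p-limit of the sequence; inside
  X this applies as soon as Zp is a subset of X. Conversely, a Vietoris p-limit F meets every basic
  set containing range g, and as the C n are pairwise disjoint, any point of F containing range g
  is g(p); hence Zp is contained in F, which lies in X.
  If card (C n) tends to infinity, injecting the subsets of an initial segment of length k n into
  C n, with k n unbounded, codes every set of naturals by a selector; distinct codes differ
  cofinitely and so have distinct image ultrafilters. A selector is determined by its range,
  so Zp has exactly the cardinality of the continuum.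
\<close>

definition image_ultrafilter :: "nat set set \<Rightarrow> (nat \<Rightarrow> nat) \<Rightarrow> nat set set" where
  "image_ultrafilter p g = {A. {n. g n \<in> A} \<in> p}"

definition beta_basic :: "nat set \<Rightarrow> nat set set set" where
  "beta_basic A = {U \<in> beta_omega. A \<in> U}"

lemma ultrafilter_on_nat_Int: "ultrafilter_on_nat U \<Longrightarrow> A \<in> U \<Longrightarrow> B \<in> U \<Longrightarrow> A \<inter> B \<in> U"
  unfolding ultrafilter_on_nat_def by blast

lemma ultrafilter_on_nat_mono: "ultrafilter_on_nat U \<Longrightarrow> A \<in> U \<Longrightarrow> A \<subseteq> B \<Longrightarrow> B \<in> U"
  unfolding ultrafilter_on_nat_def by blast

lemma ultrafilter_on_nat_nonempty: "ultrafilter_on_nat U \<Longrightarrow> A \<in> U \<Longrightarrow> A \<noteq> {}"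
  unfolding ultrafilter_on_nat_def by blast

lemma ultrafilter_on_nat_Compl_iff: "ultrafilter_on_nat U \<Longrightarrow> - A \<in> U \<longleftrightarrow> A \<notin> U"
  unfolding ultrafilter_on_nat_def by (metis Compl_disjoint)

lemma ultrafilter_on_nat_subset_imp_eq:
  assumes "ultrafilter_on_nat U" "ultrafilter_on_nat V" "U \<subseteq> V"
  shows "U = V"
  using assms ultrafilter_on_nat_Compl_iff by blast

lemma ultrafilter_on_nat_principal: "ultrafilter_on_nat (principal n)"
  unfolding ultrafilter_on_nat_def principal_def by auto

lemma ultrafilter_on_nat_image_ultrafilter:
  assumes p: "ultrafilter_on_nat p"
  shows "ultrafilter_on_nat (image_ultrafilter p g)"
  unfolding ultrafilter_on_nat_def image_ultrafilter_def mem_Collect_eq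
proof (intro conjI allI impI)
  show "{n. g n \<in> UNIV} \<in> p" "{n. g n \<in> {}} \<notin> p"
    using p unfolding ultrafilter_on_nat_def by auto
  fix A B
  show "{n. g n \<in> A} \<in> p \<and> {n. g n \<in> B} \<in> p \<Longrightarrow> {n. g n \<in> A \<inter> B} \<in> p"
    using ultrafilter_on_nat_Int[OF p] by (simp add: Collect_conj_eq)
  show "{n. g n \<in> A} \<in> p \<and> A \<subseteq> B \<Longrightarrow> {n. g n \<in> B} \<in> p"
    by (elim conjE, erule ultrafilter_on_nat_mono[OF p]) auto
next
  fix A
  show "{n. g n \<in> A} \<in> p \<or> {n. g n \<in> - A} \<in> p"
    using ultrafilter_on_nat_Compl_iff[OF p, of "{n. g n \<in> A}"] by (auto simp: Collect_neg_eq)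
qed

lemma free_ultrafilter_finite_notin:
  assumes p: "free_ultrafilter p" and "finite B"
  shows "B \<notin> p"
  using \<open>finite B\<close>
proof (induction B rule: finite_induct)
  have pu: "ultrafilter_on_nat p" using p unfolding free_ultrafilter_def by simp
  case empty
  show ?case using pu unfolding ultrafilter_on_nat_def by blast
  case (insert a B)
  show ?case
  proof
    assume "insert a B \<in> p"
    then have "insert a B \<inter> - B \<in> p"
      using insert.IH pu by (simp add: ultrafilter_on_nat_Int ultrafilter_on_nat_Compl_iff)
    then have "{a} \<in> p" by (rule ultrafilter_on_nat_mono[OF pu]) blast
    then show False using p unfolding free_ultrafilter_def by blast
  qed
qed

lemma free_ultrafilter_eventually:
  assumes p: "free_ultrafilter p" and ev: "\<forall>\<^sub>F n in sequentially. P n"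
  shows "{n. P n} \<in> p"
proof -
  have "finite (- {n. P n})"
    using ev unfolding cofinite_eq_sequentially[symmetric] eventually_cofinite Collect_neg_eq .
  then have "- {n. P n} \<notin> p" using p by (intro free_ultrafilter_finite_notin)
  then show ?thesis using p ultrafilter_on_nat_Compl_iff unfolding free_ultrafilter_def by blast
qed

lemma plim_openinD: "plim T p y s \<Longrightarrow> openin T W \<Longrightarrow> y \<in> W \<Longrightarrow> {n. s n \<in> W} \<in> p"
  unfolding plim_def by blast

lemma topspace_beta_top: "topspace beta_top = beta_omega"
proof -
  have "U \<in> {V \<in> beta_omega. UNIV \<in> V}" if "U \<in> beta_omega" for U
    using that unfolding beta_omega_def ultrafilter_on_nat_def by simp
  then have "\<Union> {{U \<in> beta_omega. A \<in> U} | A. True} = beta_omega" by blast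
  then show ?thesis unfolding beta_top_def topology_generated_by_topspace .
qed

lemma openin_beta_basic: "openin beta_top (beta_basic A)"
  unfolding beta_top_def beta_basic_def by (rule topology_generated_by_Basis) blast

lemma principal_mem_beta_basic_iff: "principal m \<in> beta_basic A \<longleftrightarrow> m \<in> A"
  using ultrafilter_on_nat_principal by (auto simp: beta_basic_def beta_omega_def principal_def)

lemma openin_beta_top_imp_beta_basic:
  assumes "openin beta_top W" "y \<in> W"
  shows "\<exists>A\<in>y. beta_basic A \<subseteq> W"
proof -
  have y: "y \<in> beta_omega" using assms openin_subset topspace_beta_top by blast
  have "generate_topology_on {{U \<in> beta_omega. A \<in> U} | A. True} W"
    using assms(1) unfolding beta_top_def by (rule openin_topology_generated_by)
  then have "y \<in> W \<Longrightarrow> y \<in> beta_omega \<Longrightarrow> \<exists>A\<in>y. beta_basic A \<subseteq> W" for y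
  proof (induction arbitrary: y)
    case (Int V W)
    obtain A where A: "A \<in> y" "beta_basic A \<subseteq> V" using Int.IH(1) Int.prems by blast
    obtain B where B: "B \<in> y" "beta_basic B \<subseteq> W" using Int.IH(2) Int.prems by blast
    have "A \<inter> B \<in> y" using A(1) B(1) Int.prems(2) ultrafilter_on_nat_Int
      unfolding beta_omega_def by blast
    moreover have "beta_basic (A \<inter> B) \<subseteq> V \<inter> W"
      using A(2) B(2) ultrafilter_on_nat_mono unfolding beta_basic_def beta_omega_def by blast
    ultimately show ?case by blast
  next
    case (UN K)
    then show ?case by blast
  qed (auto simp: beta_basic_def)
  with y assms(2) show ?thesis by blast
qed

lemma t1_space_beta_top: "t1_space beta_top"
  unfolding t1_space_def topspace_beta_top
proof (intro ballI impI)
  fix x y assume "x \<in> beta_omega" "y \<in> beta_omega" "x \<noteq> y"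
  then obtain A where "A \<in> x" "A \<notin> y"
    using ultrafilter_on_nat_subset_imp_eq unfolding beta_omega_def by blast
  then show "\<exists>U. openin beta_top U \<and> x \<in> U \<and> y \<notin> U"
    using openin_beta_basic \<open>x \<in> beta_omega\<close> unfolding beta_basic_def by blast
qed

lemma plim_beta_top_principal_iff:
  assumes p: "ultrafilter_on_nat p"
  shows "plim beta_top p z (\<lambda>n. principal (g n)) \<longleftrightarrow> z = image_ultrafilter p g"
proof
  assume lim: "plim beta_top p z (\<lambda>n. principal (g n))"
  then have z: "z \<in> beta_omega" unfolding plim_def topspace_beta_top by blast
  have "z \<subseteq> image_ultrafilter p g"
  proof
    fix A assume "A \<in> z"
    then have "{n. principal (g n) \<in> beta_basic A} \<in> p"
      using z by (intro plim_openinD[OF lim openin_beta_basic]) (simp add: beta_basic_def)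
    then show "A \<in> image_ultrafilter p g"
      unfolding image_ultrafilter_def principal_mem_beta_basic_iff by simp
  qed
  then show "z = image_ultrafilter p g"
    using ultrafilter_on_nat_subset_imp_eq ultrafilter_on_nat_image_ultrafilter p z
    unfolding beta_omega_def by blast
next
  assume z: "z = image_ultrafilter p g"
  show "plim beta_top p z (\<lambda>n. principal (g n))"
    unfolding plim_def topspace_beta_top
  proof (intro conjI allI impI)
    show "z \<in> beta_omega"
      using z ultrafilter_on_nat_image_ultrafilter p unfolding beta_omega_def by blast
    fix W assume "openin beta_top W \<and> z \<in> W"
    then obtain A where A: "A \<in> z" "beta_basic A \<subseteq> W"
      using openin_beta_top_imp_beta_basic by blast
    have "{n. g n \<in> A} \<in> p" using A z unfolding image_ultrafilter_def by simp
    moreover have "{n. g n \<in> A} \<subseteq> {n. principal (g n) \<in> W}"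
      using A principal_mem_beta_basic_iff by blast
    ultimately show "{n. principal (g n) \<in> W} \<in> p" by (rule ultrafilter_on_nat_mono[OF p])
  qed
qed

lemma plim_subtopology:
  assumes lim: "plim T p y s" and "y \<in> S" "\<And>n. s n \<in> S"
  shows "plim (subtopology T S) p y s"
  unfolding plim_def
proof (intro conjI allI impI)
  show "y \<in> topspace (subtopology T S)" using lim \<open>y \<in> S\<close> unfolding plim_def by simp
  fix W assume "openin (subtopology T S) W \<and> y \<in> W"
  then obtain V where "openin T V" "W = V \<inter> S" "y \<in> V" by (auto simp: openin_subtopology)
  then have "{n. s n \<in> V} \<in> p" by (intro plim_openinD[OF lim])
  moreover have "{n. s n \<in> V} = {n. s n \<in> W}" using \<open>W = V \<inter> S\<close> assms(3) by blast
  ultimately show "{n. s n \<in> W} \<in> p" by simp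
qed

lemma plim_topology_generated_by:
  assumes p: "ultrafilter_on_nat p" and y: "y \<in> \<Union>\<S>"
    and sub: "\<And>B. B \<in> \<S> \<Longrightarrow> y \<in> B \<Longrightarrow> {n. s n \<in> B} \<in> p"
  shows "plim (topology_generated_by \<S>) p y s"
proof -
  have "y \<in> W \<longrightarrow> {n. s n \<in> W} \<in> p" if "generate_topology_on \<S> W" for W
    using that
  proof induction
    case (Int V W)
    show ?case
    proof
      assume "y \<in> V \<inter> W"
      then have "{n. s n \<in> V} \<inter> {n. s n \<in> W} \<in> p"
        using Int.IH by (intro ultrafilter_on_nat_Int[OF p]) auto
      then show "{n. s n \<in> V \<inter> W} \<in> p" by (simp add: Collect_conj_eq)
    qed
  next
    case (UN K)
    show ?case
    proof
      assume "y \<in> \<Union>K"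
      then obtain W where "W \<in> K" "y \<in> W" by blast
      then have "{n. s n \<in> W} \<in> p" using UN by blast
      then show "{n. s n \<in> \<Union>K} \<in> p"
        by (rule ultrafilter_on_nat_mono[OF p]) (use \<open>W \<in> K\<close> in blast)
    qed
  qed (use sub in auto)
  then show ?thesis unfolding plim_def using y openin_topology_generated_by by auto
qed

lemma topspace_vietoris: "topspace (vietoris T) = CL T"
proof -
  define \<S> where "\<S> = {{F \<in> CL T. F \<subseteq> A} | A. openin T A} \<union> {{F \<in> CL T. F \<inter> A \<noteq> {}} | A. openin T A}"
  have "{F \<in> CL T. F \<subseteq> topspace T} \<in> \<S>" unfolding \<S>_def by blast
  then have "CL T \<subseteq> \<Union>\<S>" using closedin_subset unfolding CL_def by blast
  moreover have "\<Union>\<S> \<subseteq> CL T" unfolding \<S>_def by blast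
  ultimately have "\<Union>\<S> = CL T" by (rule subset_antisym[rotated])
  then show ?thesis unfolding vietoris_def \<S>_def[symmetric] by simp
qed

lemma plim_vietorisD:
  assumes "plim (vietoris T) p F s"
  shows "F \<in> CL T" "F \<subseteq> topspace T"
proof -
  show "F \<in> CL T" using assms topspace_vietoris unfolding plim_def by blast
  then show "F \<subseteq> topspace T" unfolding CL_def using closedin_subset by blast
qed

lemma openin_vietoris_upper: "openin T A \<Longrightarrow> openin (vietoris T) {F \<in> CL T. F \<subseteq> A}"
  unfolding vietoris_def by (rule topology_generated_by_Basis) blast

lemma openin_vietoris_lower: "openin T A \<Longrightarrow> openin (vietoris T) {F \<in> CL T. F \<inter> A \<noteq> {}}"
  unfolding vietoris_def by (rule topology_generated_by_Basis) blast

lemma plim_vietorisI: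
  assumes p: "ultrafilter_on_nat p" and F: "F \<in> CL T"
    and upper: "\<And>A. openin T A \<Longrightarrow> F \<subseteq> A \<Longrightarrow> {n. s n \<in> {F \<in> CL T. F \<subseteq> A}} \<in> p"
    and lower: "\<And>A. openin T A \<Longrightarrow> F \<inter> A \<noteq> {} \<Longrightarrow> {n. s n \<in> {F \<in> CL T. F \<inter> A \<noteq> {}}} \<in> p"
  shows "plim (vietoris T) p F s"
  unfolding vietoris_def
proof (rule plim_topology_generated_by[OF p])
  show "F \<in> \<Union> ({{F \<in> CL T. F \<subseteq> A} |A. openin T A} \<union> {{F \<in> CL T. F \<inter> A \<noteq> {}} |A. openin T A})"
    using F topspace_vietoris[of T] unfolding vietoris_def by simp
qed (use upper lower in blast)

lemma finite_in_CL: "t1_space T \<Longrightarrow> finite F \<Longrightarrow> F \<noteq> {} \<Longrightarrow> F \<subseteq> topspace T \<Longrightarrow> F \<in> CL T"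
  unfolding CL_def using t1_space_closedin_finite by blast

lemma plim_vietoris_closure_of_selector_limits:
  assumes p: "ultrafilter_on_nat p" and s: "\<And>n. s n \<in> CL T"
    and limits_in_Z: "\<And>\<sigma>. (\<And>n. \<sigma> n \<in> s n) \<Longrightarrow> \<exists>z\<in>Z. plim T p z \<sigma>"
    and Z_limits: "\<And>z. z \<in> Z \<Longrightarrow> \<exists>\<sigma>. (\<forall>n. \<sigma> n \<in> s n) \<and> plim T p z \<sigma>"
  shows "plim (vietoris T) p (T closure_of Z) s"
proof -
  define F where "F = T closure_of Z"
  have s_ne: "s n \<noteq> {}" for n using s unfolding CL_def by blast
  have "Z \<subseteq> topspace T" using Z_limits unfolding plim_def by blast
  then have Z_F: "Z \<subseteq> F" unfolding F_def by (rule closure_of_subset)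
  have "(SOME x. x \<in> s n) \<in> s n" for n using s_ne by (simp add: some_in_eq)
  then have "Z \<noteq> {}" using limits_in_Z[of "\<lambda>n. SOME x. x \<in> s n"] by blast
  then have F_CL: "F \<in> CL T" using Z_F unfolding F_def CL_def by auto
  show ?thesis
    unfolding F_def[symmetric]
  proof (rule plim_vietorisI[OF p F_CL])
    fix A assume A: "openin T A" "F \<subseteq> A"
    show "{n. s n \<in> {F \<in> CL T. F \<subseteq> A}} \<in> p"
    proof (rule ccontr)
      assume "{n. s n \<in> {F \<in> CL T. F \<subseteq> A}} \<notin> p"
      moreover have "- {n. s n \<in> {F \<in> CL T. F \<subseteq> A}} = {n. \<not> s n \<subseteq> A}" using s by auto
      ultimately have M: "{n. \<not> s n \<subseteq> A} \<in> p" using ultrafilter_on_nat_Compl_iff[OF p] by metis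
      \<comment> \<open>a selector leaving \<open>A\<close> whenever possible has its \<open>p\<close>-limit in \<open>Z \<subseteq> A\<close>\<close>
      have "\<exists>x. x \<in> s n \<and> (\<not> s n \<subseteq> A \<longrightarrow> x \<notin> A)" for n using s_ne by blast
      then obtain \<sigma> where \<sigma>: "\<And>n. \<sigma> n \<in> s n" "\<And>n. \<not> s n \<subseteq> A \<Longrightarrow> \<sigma> n \<notin> A" by metis
      then obtain z where "z \<in> Z" "plim T p z \<sigma>" using limits_in_Z by blast
      then have "{n. \<sigma> n \<in> A} \<in> p" using A Z_F by (intro plim_openinD) auto
      then have "{n. \<sigma> n \<in> A} \<inter> {n. \<not> s n \<subseteq> A} \<in> p" using M by (rule ultrafilter_on_nat_Int[OF p])
      moreover have "{n. \<sigma> n \<in> A} \<inter> {n. \<not> s n \<subseteq> A} = {}" using \<sigma>(2) by blast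
      ultimately show False using ultrafilter_on_nat_nonempty[OF p] by metis
    qed
  next
    fix A assume A: "openin T A" "F \<inter> A \<noteq> {}"
    obtain z where "z \<in> Z" "z \<in> A"
      using A openin_Int_closure_of_eq_empty[of T A Z] unfolding F_def by blast
    then obtain \<sigma> where \<sigma>: "\<forall>n. \<sigma> n \<in> s n" "plim T p z \<sigma>" using Z_limits by blast
    then have "{n. \<sigma> n \<in> A} \<in> p" using A \<open>z \<in> A\<close> by (intro plim_openinD) auto
    moreover have "{n. \<sigma> n \<in> A} \<subseteq> {n. s n \<in> {F \<in> CL T. F \<inter> A \<noteq> {}}}" using \<sigma>(1) s by blast
    ultimately show "{n. s n \<in> {F \<in> CL T. F \<inter> A \<noteq> {}}} \<in> p" by (rule ultrafilter_on_nat_mono[OF p])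
  qed
qed

lemma vietoris_plim_principal_meets_beta_basic:
  assumes X: "X \<subseteq> beta_omega" and p: "ultrafilter_on_nat p"
    and lim: "plim (vietoris (subtopology beta_top X)) p F (\<lambda>n. principal ` C n)"
    and D: "\<And>n. C n \<inter> D \<noteq> {}"
  shows "F \<inter> beta_basic D \<noteq> {}"
proof
  assume F_D: "F \<inter> beta_basic D = {}"
  define A where "A = beta_basic (- D) \<inter> X"
  have "openin (subtopology beta_top X) A"
    unfolding A_def by (intro openin_subtopology_Int openin_beta_basic)
  moreover have "F \<in> CL (subtopology beta_top X)" using lim by (rule plim_vietorisD)
  moreover have "F \<subseteq> A"
  proof
    fix x assume "x \<in> F"
    moreover have "F \<subseteq> X" using plim_vietorisD(2)[OF lim] by auto
    ultimately have "x \<in> X" "x \<notin> beta_basic D" using F_D by auto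
    moreover from this have "ultrafilter_on_nat x" using X unfolding beta_omega_def by blast
    ultimately show "x \<in> A"
      unfolding A_def beta_basic_def beta_omega_def by (simp add: ultrafilter_on_nat_Compl_iff)
  qed
  ultimately have "{n. principal ` C n \<in> {F \<in> CL (subtopology beta_top X). F \<subseteq> A}} \<in> p"
    by (intro plim_openinD[OF lim] openin_vietoris_upper) auto
  moreover have "{n. principal ` C n \<in> {F \<in> CL (subtopology beta_top X). F \<subseteq> A}} = {}"
  proof -
    have "\<not> principal ` C n \<subseteq> A" for n
    proof -
      obtain m where "m \<in> C n" "m \<in> D" using D by blast
      then have "principal m \<in> principal ` C n" "principal m \<notin> A"
        unfolding A_def by (simp_all add: principal_mem_beta_basic_iff)
      then show ?thesis by blast
    qed
    then show ?thesis by blast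
  qed
  ultimately have "{} \<in> p" by (simp only:)
  with ultrafilter_on_nat_nonempty[OF p] show False by blast
qed

lemma vietoris_plim_principal_range_mem_imp_eq:
  assumes X: "X \<subseteq> beta_omega" and p: "ultrafilter_on_nat p"
    and disj: "\<And>m n. m \<noteq> n \<Longrightarrow> C m \<inter> C n = {}" and g: "g \<in> Pi UNIV C"
    and lim: "plim (vietoris (subtopology beta_top X)) p F (\<lambda>n. principal ` C n)"
    and x: "x \<in> F" "range g \<in> x"
  shows "x = image_ultrafilter p g"
proof -
  have F_CL: "F \<in> CL (subtopology beta_top X)" using lim by (rule plim_vietorisD)
  have "x \<in> X" using x(1) plim_vietorisD(2)[OF lim] by auto
  then have ux: "ultrafilter_on_nat x" using X unfolding beta_omega_def by blast
  have "x \<subseteq> image_ultrafilter p g"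
  proof
    fix A assume "A \<in> x"
    define V where "V = beta_basic (A \<inter> range g) \<inter> X"
    have "openin (subtopology beta_top X) V"
      unfolding V_def by (intro openin_subtopology_Int openin_beta_basic)
    moreover have "x \<in> V"
      using \<open>A \<in> x\<close> x(2) ux ultrafilter_on_nat_Int \<open>x \<in> X\<close> X
      unfolding V_def beta_basic_def by blast
    ultimately have "{n. principal ` C n \<in> {F \<in> CL (subtopology beta_top X). F \<inter> V \<noteq> {}}} \<in> p"
      using x(1) F_CL by (intro plim_openinD[OF lim] openin_vietoris_lower) auto
    moreover have "{n. principal ` C n \<in> {F \<in> CL (subtopology beta_top X). F \<inter> V \<noteq> {}}}
        \<subseteq> {n. g n \<in> A}"
    proof
      fix n assume "n \<in> {n. principal ` C n \<in> {F \<in> CL (subtopology beta_top X). F \<inter> V \<noteq> {}}}"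
      then obtain m where "m \<in> C n" "principal m \<in> V" by blast
      then have "m \<in> A" "m \<in> range g" unfolding V_def using principal_mem_beta_basic_iff by auto
      then obtain k where "m = g k" by blast
      moreover have "g k \<in> C k" using g by (simp add: Pi_iff)
      ultimately have "k = n" using disj[of k n] \<open>m \<in> C n\<close> by blast
      then show "n \<in> {n. g n \<in> A}" using \<open>m = g k\<close> \<open>m \<in> A\<close> by simp
    qed
    ultimately have "{n. g n \<in> A} \<in> p" by (rule ultrafilter_on_nat_mono[OF p])
    then show "A \<in> image_ultrafilter p g" unfolding image_ultrafilter_def by simp
  qed
  then show ?thesis
    using ultrafilter_on_nat_subset_imp_eq ux ultrafilter_on_nat_image_ultrafilter[OF p] by blast
qed

lemma image_ultrafilter_mem_vietoris_plim:
  assumes X: "X \<subseteq> beta_omega" and p: "ultrafilter_on_nat p"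
    and disj: "\<And>m n. m \<noteq> n \<Longrightarrow> C m \<inter> C n = {}" and g: "g \<in> Pi UNIV C"
    and lim: "plim (vietoris (subtopology beta_top X)) p F (\<lambda>n. principal ` C n)"
  shows "image_ultrafilter p g \<in> F"
proof -
  have "C n \<inter> range g \<noteq> {}" for n using g by blast
  then obtain x where "x \<in> F" "range g \<in> x"
    using vietoris_plim_principal_meets_beta_basic[OF X p lim] unfolding beta_basic_def by blast
  then show ?thesis using vietoris_plim_principal_range_mem_imp_eq[OF X p disj g lim] by metis
qed

lemma vietoris_plim_principal_closure_of_image_ultrafilters:
  assumes X: "range principal \<subseteq> X" and p: "ultrafilter_on_nat p"
    and C: "\<And>n. C n \<noteq> {}" "\<And>n. finite (C n)"
    and Z: "image_ultrafilter p ` Pi UNIV C \<subseteq> X"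
  shows "plim (vietoris (subtopology beta_top X)) p
      (subtopology beta_top X closure_of (image_ultrafilter p ` Pi UNIV C)) (\<lambda>n. principal ` C n)"
proof (rule plim_vietoris_closure_of_selector_limits[OF p])
  have principal_in: "principal m \<in> topspace (subtopology beta_top X)" for m
    using X ultrafilter_on_nat_principal by (auto simp: topspace_beta_top beta_omega_def)
  have lim: "plim (subtopology beta_top X) p (image_ultrafilter p g) (\<lambda>n. principal (g n))"
    if "g \<in> Pi UNIV C" for g
  proof (rule plim_subtopology)
    show "plim beta_top p (image_ultrafilter p g) (\<lambda>n. principal (g n))"
      using plim_beta_top_principal_iff[OF p] by simp
    show "image_ultrafilter p g \<in> X" using that Z by blast
    show "principal (g n) \<in> X" for n using X by blast
  qed
  show "principal ` C n \<in> CL (subtopology beta_top X)" for n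
  proof (rule finite_in_CL)
    show "t1_space (subtopology beta_top X)" using t1_space_beta_top by (rule t1_space_subtopology)
    show "principal ` C n \<subseteq> topspace (subtopology beta_top X)" using principal_in by blast
  qed (use C in auto)
  show "\<exists>z\<in>image_ultrafilter p ` Pi UNIV C. plim (subtopology beta_top X) p z \<sigma>"
    if \<sigma>: "\<And>n. \<sigma> n \<in> principal ` C n" for \<sigma>
  proof -
    have "\<forall>n. \<exists>m. m \<in> C n \<and> \<sigma> n = principal m" using \<sigma> by blast
    then obtain g where g: "\<forall>n. g n \<in> C n \<and> \<sigma> n = principal (g n)" by (rule choice[THEN exE])
    then have "\<sigma> = (\<lambda>n. principal (g n))" by (intro ext) blast
    moreover have "g \<in> Pi UNIV C" using g by simp
    ultimately have "plim (subtopology beta_top X) p (image_ultrafilter p g) \<sigma>" using lim by simp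
    with \<open>g \<in> Pi UNIV C\<close> show ?thesis by blast
  qed
  show "\<exists>\<sigma>. (\<forall>n. \<sigma> n \<in> principal ` C n) \<and> plim (subtopology beta_top X) p z \<sigma>"
    if z: "z \<in> image_ultrafilter p ` Pi UNIV C" for z
  proof -
    obtain g where "g \<in> Pi UNIV C" "z = image_ultrafilter p g" using z by blast
    then have "(\<forall>n. principal (g n) \<in> principal ` C n)
        \<and> plim (subtopology beta_top X) p z (\<lambda>n. principal (g n))"
      using lim[of g] by (simp add: Pi_iff)
    then show ?thesis by (intro exI[of _ "\<lambda>n. principal (g n)"])
  qed
qed

lemma image_ultrafilter_neq:
  assumes p: "ultrafilter_on_nat p" and disj: "\<And>m n. m \<noteq> n \<Longrightarrow> C m \<inter> C n = {}"
    and g: "g \<in> Pi UNIV C" and h: "h \<in> Pi UNIV C" and differ: "{n. g n \<noteq> h n} \<in> p"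
  shows "image_ultrafilter p g \<noteq> image_ultrafilter p h"
proof -
  define M where "M = {n. g n \<noteq> h n}"
  have "{n. g n \<in> g ` M} \<in> p"
    using differ unfolding M_def by (rule ultrafilter_on_nat_mono[OF p]) blast
  moreover have "{n. h n \<in> g ` M} \<notin> p"
  proof
    assume "{n. h n \<in> g ` M} \<in> p"
    then have "{n. h n \<in> g ` M} \<inter> M \<in> p"
      using differ unfolding M_def by (rule ultrafilter_on_nat_Int[OF p])
    then obtain n m where "n \<in> M" "m \<in> M" "h n = g m"
      using ultrafilter_on_nat_nonempty[OF p] by blast
    moreover have "h n \<in> C n" "g m \<in> C m" using g h by (simp_all add: Pi_iff)
    ultimately have "m = n" using disj[of m n] by auto
    with \<open>n \<in> M\<close> \<open>h n = g m\<close> show False unfolding M_def by simp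
  qed
  ultimately show ?thesis unfolding image_ultrafilter_def by blast
qed

lemma inj_on_range_Pi_disjoint:
  assumes disj: "\<And>m n. m \<noteq> n \<Longrightarrow> C m \<inter> C n = {}"
  shows "inj_on range (Pi UNIV C)"
proof (rule inj_onI, rule ext)
  fix g h n assume g: "g \<in> Pi UNIV C" and h: "h \<in> Pi UNIV C" and "range g = range h"
  then obtain k where "g n = h k" by (metis rangeE range_eqI)
  moreover have "g n \<in> C n" "h k \<in> C k" using g h by (simp_all add: Pi_iff)
  ultimately have "k = n" using disj[of k n] by auto
  with \<open>g n = h k\<close> show "g n = h n" by simp
qed

lemma eventually_distinct_selectors:
  fixes C :: "nat \<Rightarrow> 'a set"
  assumes C: "\<And>n. C n \<noteq> {}" "\<And>n. finite (C n)"
    and lim: "filterlim (\<lambda>n. card (C n)) at_top sequentially"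
  obtains h :: "nat set \<Rightarrow> nat \<Rightarrow> 'a"
  where "\<And>S. h S \<in> Pi UNIV C" "\<And>S S'. S \<noteq> S' \<Longrightarrow> \<forall>\<^sub>F n in sequentially. h S n \<noteq> h S' n"
proof -
  define k where "k n = floor_log (card (C n))" for n
  have "card (Pow {..<k n}) \<le> card (C n)" for n
  proof -
    have "0 < card (C n)" using C by (simp add: card_gt_0_iff)
    then show ?thesis by (simp add: k_def card_Pow floor_log_exp2_le)
  qed
  then have "\<forall>n. \<exists>e. e ` Pow {..<k n} \<subseteq> C n \<and> inj_on e (Pow {..<k n})"
    using C(2) by (intro allI card_le_inj) auto
  then obtain e where e: "\<forall>n. e n ` Pow {..<k n} \<subseteq> C n \<and> inj_on (e n) (Pow {..<k n})"
    by (rule choice[THEN exE])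
  have k_large: "\<forall>\<^sub>F n in sequentially. j < k n" for j
  proof -
    have "\<forall>\<^sub>F n in sequentially. 2 ^ Suc j \<le> card (C n)"
      using lim unfolding filterlim_at_top by blast
    then show ?thesis
    proof eventually_elim
      case (elim n)
      have "Suc j = floor_log (2 ^ Suc j)" by simp
      also have "\<dots> \<le> k n" unfolding k_def using elim by (rule floor_log_le_iff)
      finally show ?case by simp
    qed
  qed
  define h where "h S n = e n (S \<inter> {..<k n})" for S n
  show thesis
  proof
    show "h S \<in> Pi UNIV C" for S using e unfolding h_def by (auto simp: image_subset_iff)
    fix S S' :: "nat set" assume "S \<noteq> S'"
    then obtain j where j: "j \<in> S \<longleftrightarrow> j \<notin> S'" by blast
    show "\<forall>\<^sub>F n in sequentially. h S n \<noteq> h S' n"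
      using k_large[of j]
    proof eventually_elim
      case (elim n)
      then have "S \<inter> {..<k n} \<noteq> S' \<inter> {..<k n}" using j by blast
      moreover have "inj_on (e n) (Pow {..<k n})" using e by blast
      ultimately show ?case unfolding h_def by (simp add: inj_on_eq_iff)
    qed
  qed
qed

lemma image_ultrafilters_eqpoll_reals:
  assumes p: "free_ultrafilter p"
    and C: "\<And>n. C n \<noteq> {}" "\<And>n. finite (C n)" and disj: "\<And>m n. m \<noteq> n \<Longrightarrow> C m \<inter> C n = {}"
    and lim: "filterlim (\<lambda>n. card (C n)) at_top sequentially"
  shows "image_ultrafilter p ` Pi UNIV C \<approx> (UNIV :: real set)"
proof -
  have pu: "ultrafilter_on_nat p" using p unfolding free_ultrafilter_def by simp
  obtain h :: "nat set \<Rightarrow> nat \<Rightarrow> nat" where h: "\<And>S. h S \<in> Pi UNIV C"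
    and h_distinct: "\<And>S S'. S \<noteq> S' \<Longrightarrow> \<forall>\<^sub>F n in sequentially. h S n \<noteq> h S' n"
    using eventually_distinct_selectors[OF C lim] by blast
  have "inj (\<lambda>S. image_ultrafilter p (h S))"
  proof (rule injI)
    fix S S' assume eq: "image_ultrafilter p (h S) = image_ultrafilter p (h S')"
    show "S = S'"
    proof (rule ccontr)
      assume "S \<noteq> S'"
      then have "{n. h S n \<noteq> h S' n} \<in> p" by (rule free_ultrafilter_eventually[OF p h_distinct])
      then have "image_ultrafilter p (h S) \<noteq> image_ultrafilter p (h S')"
        using image_ultrafilter_neq[OF pu disj h[of S] h[of S']] by blast
      with eq show False by contradiction
    qed
  qed
  then have "(UNIV :: nat set set) \<lesssim> image_ultrafilter p ` Pi UNIV C"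
    unfolding lepoll_def
    by (intro exI[of _ "\<lambda>S. image_ultrafilter p (h S)"] conjI) (use h in auto)
  moreover have "image_ultrafilter p ` Pi UNIV C \<lesssim> (UNIV :: nat set set)"
  proof -
    have "image_ultrafilter p ` Pi UNIV C \<lesssim> Pi UNIV C" by (rule image_lepoll)
    also have "Pi UNIV C \<approx> range ` Pi UNIV C"
      using inj_on_range_Pi_disjoint[OF disj] by (rule inj_on_image_eqpoll_self[THEN eqpoll_sym])
    also have "range ` Pi UNIV C \<lesssim> (UNIV :: nat set set)" by (rule subset_imp_lepoll) simp
    finally show ?thesis .
  qed
  ultimately have "image_ultrafilter p ` Pi UNIV C \<approx> (UNIV :: nat set set)"
    by (intro lepoll_antisym)
  then show ?thesis using nat_sets_eqpoll_reals by (rule eqpoll_trans)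
qed

theorem lemma2p1:
  fixes X :: "nat set set set" and p :: "nat set set" and C :: "nat \<Rightarrow> nat set"
  assumes "range principal \<subseteq> X" and "X \<subseteq> beta_omega"
    and "free_ultrafilter p"
    and "\<And>n. C n \<noteq> {}" and "\<And>n. finite (C n)"
    and "\<And>m n. m \<noteq> n \<Longrightarrow> C m \<inter> C n = {}"
  defines "G \<equiv> {g :: nat \<Rightarrow> nat. \<forall>n. g n \<in> C n}"
  defines "Zp \<equiv> {z. \<exists>g\<in>G. plim beta_top p z (\<lambda>n. principal (g n))}"
  shows "((\<exists>F. plim (vietoris (subtopology beta_top X)) p F (\<lambda>n. principal ` C n))
            \<longleftrightarrow> plim (vietoris (subtopology beta_top X)) p
                   (subtopology beta_top X closure_of Zp) (\<lambda>n. principal ` C n))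
       \<and> (plim (vietoris (subtopology beta_top X)) p
                   (subtopology beta_top X closure_of Zp) (\<lambda>n. principal ` C n)
            \<longleftrightarrow> Zp \<subseteq> X)
       \<and> ((\<forall>n. card (C n) \<le> card (C (Suc n))) \<and> filterlim (\<lambda>n. card (C n)) at_top sequentially
            \<longrightarrow> (\<exists>f. bij_betw f Zp (UNIV :: real set)))"
proof -
  have p: "ultrafilter_on_nat p" using assms(3) unfolding free_ultrafilter_def by simp
  have G: "G = Pi UNIV C" unfolding G_def Pi_def by blast
  have Zp: "Zp = image_ultrafilter p ` Pi UNIV C"
    unfolding Zp_def G plim_beta_top_principal_iff[OF p] image_def by (rule refl)
  have limit_imp_subset: "Zp \<subseteq> X"
    if lim: "plim (vietoris (subtopology beta_top X)) p F (\<lambda>n. principal ` C n)" for F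
  proof -
    have "Zp \<subseteq> F" unfolding Zp image_subset_iff
      using image_ultrafilter_mem_vietoris_plim[OF assms(2) p assms(6) _ lim] by blast
    moreover have "F \<subseteq> X" using plim_vietorisD(2)[OF lim] by auto
    ultimately show ?thesis by (rule order_trans)
  qed
  have subset_imp_closure_limit: "plim (vietoris (subtopology beta_top X)) p
      (subtopology beta_top X closure_of Zp) (\<lambda>n. principal ` C n)" if "Zp \<subseteq> X"
    using that unfolding Zp
    by (rule vietoris_plim_principal_closure_of_image_ultrafilters[OF assms(1) p assms(4,5)])
  have continuum: "\<exists>f. bij_betw f Zp (UNIV :: real set)"
    if "filterlim (\<lambda>n. card (C n)) at_top sequentially"
    using image_ultrafilters_eqpoll_reals[OF assms(3-6) that] unfolding Zp eqpoll_def .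
  show ?thesis
  proof (intro conjI iffI impI)
    show "plim (vietoris (subtopology beta_top X)) p
        (subtopology beta_top X closure_of Zp) (\<lambda>n. principal ` C n)"
      if "\<exists>F. plim (vietoris (subtopology beta_top X)) p F (\<lambda>n. principal ` C n)"
      using that limit_imp_subset subset_imp_closure_limit by blast
    show "Zp \<subseteq> X"
      if "plim (vietoris (subtopology beta_top X)) p
        (subtopology beta_top X closure_of Zp) (\<lambda>n. principal ` C n)"
      using that by (rule limit_imp_subset)
  qed (use subset_imp_closure_limit continuum in blast)+
qed

end
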